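(* Let $L>0$, $\theta_1>0$, $\theta_2>0$, $0\le\epsilon<1$, $\omega\ge0$, $0<v_{\max}<1$, $c(t)=\theta_1(1+\epsilon\cos(\omega t))$, $D(t,x)=\frac{L-x}{c(t)}$, $\Gamma(x,U)=\frac{\theta_2x}{(1+\theta_2x)(1-U)}-\frac{U}{1-U}$ and $f(t,x,U)=-c(t)\Gamma(x,U)$. Suppose one of the conditions (i), (ii), (iii) holds: (i) $0\le\frac{\epsilon\omega}{(1-\epsilon)^2}<\frac{\theta_1\theta_2}{(1+\theta_2L)^2}$; (ii) $\frac{\theta_1\theta_2}{(1+\theta_2L)^2}<\frac{\epsilon\omega}{(1-\epsilon)^2}<\frac{\theta_1}{L}$ and $\theta_2<\frac1L$; (iii) $\frac{\theta_1\theta_2}{(1+\theta_2L)^2}<\frac{\epsilon\omega}{(1-\epsilon)^2}<\frac{4\theta_1\theta_2}{(1+\theta_2L)^2}$ and $\theta_2>\frac1L$. Then $$\frac{\partial D}{\partial t}(t,x)+\frac{\partial D}{\partial x}(t,x)f(t,x,U)<1$$ for all $t\ge0$, all $x\in(0,L)$ and all $U\in[0,v_{\max}]$.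
   Context: This is the feasibility condition (the delay rate $\frac{d}{dt}D(t,x(t))$ is bounded by one) for the screw extruder model $\dot x(t)=f(t,x(t),U(t-D(t,x(t))))$, where $x$ is the length of the fully filled zone of the extruder and $U$ the inlet filling ratio. *)

theory Defs
  imports "HOL-Analysis.Analysis"
begin

definition extr_c :: "real \<Rightarrow> real \<Rightarrow> real \<Rightarrow> real \<Rightarrow> real" where
  "extr_c \<theta>1 \<epsilon> \<omega> t = \<theta>1 * (1 + \<epsilon> * cos (\<omega> * t))"

definition extr_D :: "real \<Rightarrow> real \<Rightarrow> real \<Rightarrow> real \<Rightarrow> real \<Rightarrow> real \<Rightarrow> real" where
  "extr_D L \<theta>1 \<epsilon> \<omega> t x = (L - x) / extr_c \<theta>1 \<epsilon> \<omega> t"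

definition extr_Gamma :: "real \<Rightarrow> real \<Rightarrow> real \<Rightarrow> real" where
  "extr_Gamma \<theta>2 x U = \<theta>2 * x / ((1 + \<theta>2 * x) * (1 - U)) - U / (1 - U)"

definition extr_f :: "real \<Rightarrow> real \<Rightarrow> real \<Rightarrow> real \<Rightarrow> real \<Rightarrow> real \<Rightarrow> real \<Rightarrow> real" where
  "extr_f \<theta>1 \<theta>2 \<epsilon> \<omega> t x U = - extr_c \<theta>1 \<epsilon> \<omega> t * extr_Gamma \<theta>2 x U"

end

theory Submission
  imports Defs
begin

text \<open>Along the model the delay rate equals
  \<open>(L - x) \<theta>1 \<epsilon> \<omega> sin(\<omega> t) / c(t)\<^sup>2 + \<Gamma>(x, U)\<close>, and
  \<open>1 - \<Gamma>(x, U) = 1 / ((1 + \<theta>2 x)(1 - U)) \<ge> 1 / (1 + \<theta>2 x)\<close>.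
  Since \<open>c(t) \<ge> \<theta>1 (1 - \<epsilon>)\<close>, the time term is at most \<open>(L - x) K / \<theta>1\<close> with
  \<open>K = \<epsilon> \<omega> / (1 - \<epsilon>)\<^sup>2\<close>, so it suffices that \<open>K (L - x)(1 + \<theta>2 x) < \<theta>1\<close> on \<open>(0, L)\<close>.
  By AM-GM, \<open>\<theta>2 (L - x)(1 + \<theta>2 x) \<le> (1 + \<theta>2 L)\<^sup>2 / 4\<close>, which settles conditions (i)
  and (iii); if \<open>\<theta>2 L < 1\<close> then \<open>(L - x)(1 + \<theta>2 x) \<le> L\<close>, which settles (ii).\<close>

lemma extr_c_lower_bound:
  assumes "\<theta>1 \<ge> 0" and "\<epsilon> \<ge> 0"
  shows "\<theta>1 * (1 - \<epsilon>) \<le> extr_c \<theta>1 \<epsilon> \<omega> t"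
proof -
  have "- \<epsilon> \<le> \<epsilon> * cos (\<omega> * t)"
    using assms(2) mult_left_mono[OF cos_ge_minus_one, of \<epsilon>] by simp
  then show ?thesis
    unfolding extr_c_def using assms(1) by (intro mult_left_mono) auto
qed

lemma extr_D_has_derivative_time:
  assumes "extr_c \<theta>1 \<epsilon> \<omega> t \<noteq> 0"
  shows "((\<lambda>s. extr_D L \<theta>1 \<epsilon> \<omega> s x) has_real_derivative
           (L - x) * (\<theta>1 * \<epsilon> * \<omega> * sin (\<omega> * t)) / (extr_c \<theta>1 \<epsilon> \<omega> t)\<^sup>2) (at t)"
  using assms unfolding extr_D_def extr_c_def
  by (auto intro!: derivative_eq_intros simp: field_simps power2_eq_square)

lemma extr_D_has_derivative_space:
  assumes "extr_c \<theta>1 \<epsilon> \<omega> t \<noteq> 0"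
  shows "((\<lambda>y. extr_D L \<theta>1 \<epsilon> \<omega> t y) has_real_derivative - 1 / extr_c \<theta>1 \<epsilon> \<omega> t) (at x)"
  using assms unfolding extr_D_def
  by (auto intro!: derivative_eq_intros simp: field_simps)

lemma extr_delay_rate_eq:
  assumes "extr_c \<theta>1 \<epsilon> \<omega> t \<noteq> 0"
  shows "deriv (\<lambda>s. extr_D L \<theta>1 \<epsilon> \<omega> s x) t
           + deriv (\<lambda>y. extr_D L \<theta>1 \<epsilon> \<omega> t y) x * extr_f \<theta>1 \<theta>2 \<epsilon> \<omega> t x U
         = (L - x) * (\<theta>1 * \<epsilon> * \<omega> * sin (\<omega> * t)) / (extr_c \<theta>1 \<epsilon> \<omega> t)\<^sup>2
           + extr_Gamma \<theta>2 x U"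
  using DERIV_imp_deriv[OF extr_D_has_derivative_time[OF assms]]
    DERIV_imp_deriv[OF extr_D_has_derivative_space[OF assms]] assms
  by (simp add: extr_f_def)

lemma one_minus_extr_Gamma:
  assumes "U \<noteq> 1" and "1 + \<theta>2 * x \<noteq> 0"
  shows "1 - extr_Gamma \<theta>2 x U = 1 / ((1 + \<theta>2 * x) * (1 - U))"
proof -
  have "1 - U \<noteq> 0"
    using assms by simp
  have "1 - extr_Gamma \<theta>2 x U
        = ((1 + \<theta>2 * x) * (1 - U) - \<theta>2 * x + U * (1 + \<theta>2 * x)) / ((1 + \<theta>2 * x) * (1 - U))"
    using assms \<open>1 - U \<noteq> 0\<close> unfolding extr_Gamma_def by (simp add: divide_simps)
  also have "(1 + \<theta>2 * x) * (1 - U) - \<theta>2 * x + U * (1 + \<theta>2 * x) = 1"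
    by (simp add: algebra_simps)
  finally show ?thesis .
qed

lemma one_minus_extr_Gamma_lower_bound:
  assumes "0 \<le> U" and "U < 1" and "1 + \<theta>2 * x > 0"
  shows "1 / (1 + \<theta>2 * x) \<le> 1 - extr_Gamma \<theta>2 x U"
proof -
  have "(1 + \<theta>2 * x) * (1 - U) \<le> 1 + \<theta>2 * x"
    using assms by (simp add: mult_left_le)
  moreover have "(1 + \<theta>2 * x) * (1 - U) > 0"
    using assms by simp
  ultimately show ?thesis
    using assms by (simp add: one_minus_extr_Gamma frac_le)
qed

lemma extr_time_term_upper_bound:
  assumes "\<theta>1 > 0" and "0 \<le> \<epsilon>" and "\<epsilon> < 1" and "\<omega> \<ge> 0" and "x \<le> L"
  shows "(L - x) * (\<theta>1 * \<epsilon> * \<omega> * sin (\<omega> * t)) / (extr_c \<theta>1 \<epsilon> \<omega> t)\<^sup>2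
           \<le> (L - x) * (\<epsilon> * \<omega> / (1 - \<epsilon>)\<^sup>2) / \<theta>1"
proof -
  define c where "c = extr_c \<theta>1 \<epsilon> \<omega> t"
  have c_min: "0 < \<theta>1 * (1 - \<epsilon>)" "\<theta>1 * (1 - \<epsilon>) \<le> c"
    using assms extr_c_lower_bound[of \<theta>1 \<epsilon> \<omega> t] by (auto simp: c_def)
  have num_nonneg: "0 \<le> (L - x) * (\<theta>1 * \<epsilon> * \<omega>)"
    using assms by simp
  have "(L - x) * (\<theta>1 * \<epsilon> * \<omega> * sin (\<omega> * t)) \<le> (L - x) * (\<theta>1 * \<epsilon> * \<omega>)"
    using assms by (intro mult_left_mono) (auto simp: mult_left_le)
  then have "(L - x) * (\<theta>1 * \<epsilon> * \<omega> * sin (\<omega> * t)) / c\<^sup>2 \<le> (L - x) * (\<theta>1 * \<epsilon> * \<omega>) / c\<^sup>2"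
    by (simp add: divide_right_mono)
  also have "\<dots> \<le> (L - x) * (\<theta>1 * \<epsilon> * \<omega>) / (\<theta>1 * (1 - \<epsilon>))\<^sup>2"
    using c_min num_nonneg by (intro divide_left_mono power_mono mult_pos_pos) auto
  also have "\<dots> = (L - x) * (\<epsilon> * \<omega> / (1 - \<epsilon>)\<^sup>2) / \<theta>1"
    using assms by (simp add: power_mult_distrib power2_eq_square)
  finally show ?thesis
    by (simp add: c_def)
qed

lemma product_le_am_gm:
  fixes \<theta>2 L x :: real
  shows "\<theta>2 * ((L - x) * (1 + \<theta>2 * x)) \<le> (1 + \<theta>2 * L)\<^sup>2 / 4"
proof -
  have "0 \<le> (\<theta>2 * (L - x) - (1 + \<theta>2 * x))\<^sup>2"
    by simp
  then show ?thesis
    by (simp add: power2_eq_square algebra_simps)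
qed

lemma product_le_length:
  fixes \<theta>2 L x :: real
  assumes "0 \<le> x" and "x \<le> L" and "0 \<le> \<theta>2" and "\<theta>2 * L \<le> 1"
  shows "(L - x) * (1 + \<theta>2 * x) \<le> L"
proof -
  have "\<theta>2 * (L - x) \<le> 1"
    using assms by (smt (verit) mult_left_mono)
  then have "x * (\<theta>2 * (L - x)) \<le> x"
    using assms(1) by (simp add: mult_left_le)
  then show ?thesis
    by (simp add: algebra_simps)
qed

lemma extr_feasibility_margin:
  fixes L \<theta>1 \<theta>2 K x :: real
  assumes "L > 0" and "\<theta>1 > 0" and "\<theta>2 > 0" and "K \<ge> 0" and "0 < x" and "x < L"
    and cond: "(0 \<le> K \<and> K < \<theta>1 * \<theta>2 / (1 + \<theta>2 * L)\<^sup>2)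
           \<or> (\<theta>1 * \<theta>2 / (1 + \<theta>2 * L)\<^sup>2 < K \<and> K < \<theta>1 / L \<and> \<theta>2 < 1 / L)
           \<or> (\<theta>1 * \<theta>2 / (1 + \<theta>2 * L)\<^sup>2 < K \<and> K < 4 * \<theta>1 * \<theta>2 / (1 + \<theta>2 * L)\<^sup>2 \<and> \<theta>2 > 1 / L)"
  shows "K * ((L - x) * (1 + \<theta>2 * x)) < \<theta>1"
proof -
  have P_pos: "(L - x) * (1 + \<theta>2 * x) > 0"
    using assms by (simp add: add_pos_nonneg)
  have "1 + \<theta>2 * L > 0"
    using assms by (simp add: add_pos_nonneg)
  then have sq_pos: "(1 + \<theta>2 * L)\<^sup>2 > 0"
    by simp
  consider (am_gm) "K < 4 * \<theta>1 * \<theta>2 / (1 + \<theta>2 * L)\<^sup>2" | (short) "K < \<theta>1 / L" "\<theta>2 < 1 / L"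
  proof -
    have "\<theta>1 * \<theta>2 / (1 + \<theta>2 * L)\<^sup>2 \<le> 4 * \<theta>1 * \<theta>2 / (1 + \<theta>2 * L)\<^sup>2"
      using assms sq_pos by (simp add: divide_right_mono)
    then show ?thesis
      using cond that by linarith
  qed
  then show ?thesis
  proof cases
    case am_gm
    have "K * ((L - x) * (1 + \<theta>2 * x))
          < 4 * \<theta>1 * \<theta>2 / (1 + \<theta>2 * L)\<^sup>2 * ((L - x) * (1 + \<theta>2 * x))"
      using am_gm P_pos by (rule mult_strict_right_mono)
    also have "\<dots> = 4 * \<theta>1 / (1 + \<theta>2 * L)\<^sup>2 * (\<theta>2 * ((L - x) * (1 + \<theta>2 * x)))"
      by simp
    also have "\<dots> \<le> 4 * \<theta>1 / (1 + \<theta>2 * L)\<^sup>2 * ((1 + \<theta>2 * L)\<^sup>2 / 4)"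
      using assms sq_pos product_le_am_gm by (intro mult_left_mono) auto
    also have "\<dots> = \<theta>1"
      using \<open>1 + \<theta>2 * L > 0\<close> by simp
    finally show ?thesis .
  next
    case short
    have "\<theta>2 * L \<le> 1"
      using short assms(1) by (simp add: field_simps)
    then have "K * ((L - x) * (1 + \<theta>2 * x)) \<le> K * L"
      using assms product_le_length by (intro mult_left_mono) auto
    also have "\<dots> < \<theta>1"
      using short assms(1) by (simp add: field_simps)
    finally show ?thesis .
  qed
qed

theorem mainTheorem4:
  fixes L \<theta>1 \<theta>2 \<epsilon> \<omega> vmax :: real
  assumes "L > 0" and "\<theta>1 > 0" and "\<theta>2 > 0"
    and "0 \<le> \<epsilon>" and "\<epsilon> < 1" and "\<omega> \<ge> 0"
    and "0 < vmax" and "vmax < 1"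
    and cond: "(0 \<le> \<epsilon> * \<omega> / (1 - \<epsilon>)\<^sup>2 \<and>
                \<epsilon> * \<omega> / (1 - \<epsilon>)\<^sup>2 < \<theta>1 * \<theta>2 / (1 + \<theta>2 * L)\<^sup>2)
           \<or> (\<theta>1 * \<theta>2 / (1 + \<theta>2 * L)\<^sup>2 < \<epsilon> * \<omega> / (1 - \<epsilon>)\<^sup>2 \<and>
                \<epsilon> * \<omega> / (1 - \<epsilon>)\<^sup>2 < \<theta>1 / L \<and> \<theta>2 < 1 / L)
           \<or> (\<theta>1 * \<theta>2 / (1 + \<theta>2 * L)\<^sup>2 < \<epsilon> * \<omega> / (1 - \<epsilon>)\<^sup>2 \<and>
                \<epsilon> * \<omega> / (1 - \<epsilon>)\<^sup>2 < 4 * \<theta>1 * \<theta>2 / (1 + \<theta>2 * L)\<^sup>2 \<and> \<theta>2 > 1 / L)"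
  shows "\<forall>t x U. t \<ge> 0 \<longrightarrow> 0 < x \<longrightarrow> x < L \<longrightarrow> 0 \<le> U \<longrightarrow> U \<le> vmax \<longrightarrow>
           deriv (\<lambda>s. extr_D L \<theta>1 \<epsilon> \<omega> s x) t
           + deriv (\<lambda>y. extr_D L \<theta>1 \<epsilon> \<omega> t y) x * extr_f \<theta>1 \<theta>2 \<epsilon> \<omega> t x U < 1"
proof (intro allI impI)
  fix t x U :: real
  assume "t \<ge> 0" and x: "0 < x" "x < L" and U: "0 \<le> U" "U \<le> vmax"
  define K where "K = \<epsilon> * \<omega> / (1 - \<epsilon>)\<^sup>2"
  have "extr_c \<theta>1 \<epsilon> \<omega> t > 0"
    using assms extr_c_lower_bound[of \<theta>1 \<epsilon> \<omega> t] by (smt (verit) mult_pos_pos)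
  then have rate: "deriv (\<lambda>s. extr_D L \<theta>1 \<epsilon> \<omega> s x) t
           + deriv (\<lambda>y. extr_D L \<theta>1 \<epsilon> \<omega> t y) x * extr_f \<theta>1 \<theta>2 \<epsilon> \<omega> t x U
         \<le> (L - x) * K / \<theta>1 + extr_Gamma \<theta>2 x U"
    using extr_delay_rate_eq extr_time_term_upper_bound[of \<theta>1 \<epsilon> \<omega> x L t] assms x
    by (simp add: K_def)
  have "1 + \<theta>2 * x > 0"
    using assms x by (simp add: add_pos_nonneg)
  moreover have "K * ((L - x) * (1 + \<theta>2 * x)) < \<theta>1"
    using extr_feasibility_margin[of L \<theta>1 \<theta>2 K x] assms x cond by (simp add: K_def)
  ultimately have "(L - x) * K / \<theta>1 < 1 / (1 + \<theta>2 * x)"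
    using assms by (simp add: field_simps)
  then show "deriv (\<lambda>s. extr_D L \<theta>1 \<epsilon> \<omega> s x) t
           + deriv (\<lambda>y. extr_D L \<theta>1 \<epsilon> \<omega> t y) x * extr_f \<theta>1 \<theta>2 \<epsilon> \<omega> t x U < 1"
    using rate one_minus_extr_Gamma_lower_bound[of U \<theta>2 x] U assms \<open>1 + \<theta>2 * x > 0\<close>
    by linarith
qed

end
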